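(* Let $S$ be a semigroup with finite $\mathcal{R}$-height, and let $A$ be a left ideal of $S$ such that every element of $A$ is a regular element of $S$. Then $\mathrm{H}_{\mathcal{R}}(A)=n$, where $n$ is the maximal length of a chain of $\mathcal{R}$-classes of $S$ each of which intersects $A$.
   Context: An element $a\in S$ is regular if $a=aba$ for some $b\in S$. For a semigroup $S$, $S^1$ denotes $S$ with an identity adjoined if necessary. Green's preorder: $a\leq_{\mathcal{R}} b$ iff $aS^1\subseteq bS^1$; $\mathcal{R}$ is the associated equivalence. $\mathcal{R}$-classes are ordered by $R_a\leq R_b$ iff $a\leq_{\mathcal{R}} b$, and the $\mathcal{R}$-height $\mathrm{H}_{\mathcal{R}}$ is the supremum of the cardinalities of chains of $\mathcal{R}$-classes. A left ideal is a non-empty subset $A$ with $SA\subseteq A$; $\mathrm{H}_{\mathcal{R}}(A)$ is computed in the semigroup $A$ itself. *)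

theory Defs
  imports Main "HOL-Library.Extended_Nat"
begin

text \<open>Green's R-relation, relativised to a subsemigroup with carrier M
  (the multiplication is the ambient one). M^1-principal right ideal: aM^1 = {a} \<union> aM.\<close>

definition rideal :: "'a::semigroup_mult set \<Rightarrow> 'a \<Rightarrow> 'a set" where
  "rideal M a = insert a ((\<lambda>x. a * x) ` M)"

definition leq_R :: "'a::semigroup_mult set \<Rightarrow> 'a \<Rightarrow> 'a \<Rightarrow> bool" where
  "leq_R M a b \<longleftrightarrow> rideal M a \<subseteq> rideal M b"

definition Rclass :: "'a::semigroup_mult set \<Rightarrow> 'a \<Rightarrow> 'a set" where
  "Rclass M a = {b \<in> M. leq_R M a b \<and> leq_R M b a}"

definition Rclasses :: "'a::semigroup_mult set \<Rightarrow> 'a set set" where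
  "Rclasses M = Rclass M ` M"

definition Rclass_le :: "'a::semigroup_mult set \<Rightarrow> 'a set \<Rightarrow> 'a set \<Rightarrow> bool" where
  "Rclass_le M X Y \<longleftrightarrow> (\<exists>a\<in>X. \<exists>b\<in>Y. leq_R M a b)"

definition Rchain :: "'a::semigroup_mult set \<Rightarrow> 'a set set \<Rightarrow> bool" where
  "Rchain M C \<longleftrightarrow> C \<subseteq> Rclasses M \<and> (\<forall>X\<in>C. \<forall>Y\<in>C. Rclass_le M X Y \<or> Rclass_le M Y X)"

text \<open>R-height: supremum of the cardinalities of chains of R-classes
  (infinite chains contain arbitrarily large finite subchains, so finite chains suffice).\<close>
definition R_height :: "'a::semigroup_mult set \<Rightarrow> enat" where
  "R_height M = (SUP C\<in>{C. Rchain M C \<and> finite C}. enat (card C))"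

definition left_ideal :: "'a::semigroup_mult set \<Rightarrow> bool" where
  "left_ideal A \<longleftrightarrow> A \<noteq> {} \<and> (\<forall>s. \<forall>a\<in>A. s * a \<in> A)"

definition regular :: "'a::semigroup_mult \<Rightarrow> bool" where
  "regular a \<longleftrightarrow> (\<exists>b. a = a * b * a)"

end

theory Submission
  imports Defs
begin

text \<open>For a regular element a of a left ideal A, every relation a = b s in S can
  be rewritten as a = b (s x a) with a = a x a, and s x a lies in A. Hence Green's preorder of
  the semigroup A is the restriction of that of S, so intersecting with A is an order
  isomorphism from the R-classes of S that meet A onto the R-classes of A, and the two
  suprema of chain lengths agree.\<close>

lemma leq_R_refl [simp]: "leq_R M a a"
  unfolding leq_R_def by simp

lemma leq_R_trans: "leq_R M a b \<Longrightarrow> leq_R M b c \<Longrightarrow> leq_R M a c"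
  unfolding leq_R_def by blast

lemma leq_R_iff_mem_rideal:
  assumes closed: "\<And>x y. x \<in> M \<Longrightarrow> y \<in> M \<Longrightarrow> x * y \<in> M"
  shows "leq_R M a b \<longleftrightarrow> a \<in> rideal M b"
proof
  show "leq_R M a b \<Longrightarrow> a \<in> rideal M b"
    unfolding leq_R_def rideal_def by blast
next
  assume "a \<in> rideal M b"
  then consider "a = b" | u where "u \<in> M" "a = b * u"
    unfolding rideal_def by blast
  then show "leq_R M a b"
  proof cases
    case (2 u)
    have "a * t \<in> (\<lambda>x. b * x) ` M" if "t \<in> M" for t
      using closed[OF \<open>u \<in> M\<close> that] \<open>a = b * u\<close> by (metis image_eqI mult.assoc)
    then show ?thesis
      using \<open>u \<in> M\<close> \<open>a = b * u\<close> unfolding leq_R_def rideal_def by auto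
  qed simp
qed

lemma Rclass_self: "a \<in> M \<Longrightarrow> a \<in> Rclass M a"
  unfolding Rclass_def by simp

lemma Rclass_eqI: "b \<in> Rclass M a \<Longrightarrow> Rclass M b = Rclass M a"
  unfolding Rclass_def by (auto intro: leq_R_trans)

lemma Rclass_le_Rclass_iff:
  assumes "a \<in> M" "b \<in> M"
  shows "Rclass_le M (Rclass M a) (Rclass M b) \<longleftrightarrow> leq_R M a b"
proof
  assume "Rclass_le M (Rclass M a) (Rclass M b)"
  then obtain x y where "x \<in> Rclass M a" "y \<in> Rclass M b" "leq_R M x y"
    unfolding Rclass_le_def by blast
  then show "leq_R M a b"
    unfolding Rclass_def by (blast intro: leq_R_trans)
qed (use assms Rclass_self in \<open>auto simp: Rclass_le_def\<close>)

lemma left_ideal_leq_R_iff: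
  assumes "left_ideal A" "\<forall>a\<in>A. regular a" "a \<in> A" "b \<in> A"
  shows "leq_R A a b \<longleftrightarrow> leq_R UNIV a b"
proof -
  have closed: "\<And>x y. x \<in> A \<Longrightarrow> y \<in> A \<Longrightarrow> x * y \<in> A"
    using \<open>left_ideal A\<close> unfolding left_ideal_def by blast
  have "a \<in> rideal A b" if b_divides: "a \<in> rideal UNIV b"
  proof (cases "a = b")
    case False
    then obtain s where "a = b * s"
      using b_divides unfolding rideal_def by blast
    moreover obtain x where "a = a * x * a"
      using assms(2,3) unfolding regular_def by blast
    ultimately have "a = b * (s * x * a)"
      by (metis mult.assoc)
    moreover have "s * x * a \<in> A"
      using assms(1,3) unfolding left_ideal_def by blast
    ultimately show ?thesis
      unfolding rideal_def by blast
  qed (simp add: rideal_def)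
  moreover have "rideal A b \<subseteq> rideal UNIV b"
    unfolding rideal_def by blast
  ultimately show ?thesis
    using leq_R_iff_mem_rideal[of A, OF closed] leq_R_iff_mem_rideal[of UNIV] by blast
qed

locale R_compatible =
  fixes M A :: "'a::semigroup_mult set"
  assumes subset: "A \<subseteq> M"
    and leq_R_agree: "\<And>a b. a \<in> A \<Longrightarrow> b \<in> A \<Longrightarrow> leq_R A a b \<longleftrightarrow> leq_R M a b"
begin

abbreviation meeting_Rclasses :: "'a set set" where
  "meeting_Rclasses \<equiv> {X \<in> Rclasses M. X \<inter> A \<noteq> {}}"

lemma Rclass_restrict: "a \<in> A \<Longrightarrow> Rclass A a = Rclass M a \<inter> A"
  using subset unfolding Rclass_def by (auto simp: leq_R_agree)

lemma meeting_RclassE: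
  assumes "X \<in> meeting_Rclasses"
  obtains a where "a \<in> A" "X = Rclass M a"
proof -
  obtain c a where X: "X = Rclass M c" and "a \<in> X" "a \<in> A"
    using assms unfolding Rclasses_def by blast
  then have "X = Rclass M a"
    using Rclass_eqI[of a M c] by simp
  with \<open>a \<in> A\<close> show ?thesis
    by (rule that)
qed

lemma bij_betw_restrict_Rclasses:
  "bij_betw (\<lambda>X. X \<inter> A) meeting_Rclasses (Rclasses A)"
proof (rule bij_betwI')
  fix X Y assume "X \<in> meeting_Rclasses" "Y \<in> meeting_Rclasses"
  then obtain a b where "a \<in> A" and X: "X = Rclass M a" and Y: "Y = Rclass M b"
    by (metis meeting_RclassE)
  show "X \<inter> A = Y \<inter> A \<longleftrightarrow> X = Y"
  proof
    assume "X \<inter> A = Y \<inter> A"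
    then have "a \<in> Y"
      using \<open>a \<in> A\<close> subset Rclass_self[of a M] X by blast
    then show "X = Y"
      using Rclass_eqI[of a M b] by (simp add: X Y)
  qed simp
next
  fix X assume "X \<in> meeting_Rclasses"
  then obtain a where "a \<in> A" "X = Rclass M a"
    by (rule meeting_RclassE)
  then have "X \<inter> A = Rclass A a"
    by (simp add: Rclass_restrict)
  with \<open>a \<in> A\<close> show "X \<inter> A \<in> Rclasses A"
    unfolding Rclasses_def by blast
next
  fix Y assume "Y \<in> Rclasses A"
  then obtain a where "a \<in> A" "Y = Rclass M a \<inter> A"
    unfolding Rclasses_def using Rclass_restrict by auto
  moreover have "Rclass M a \<in> meeting_Rclasses"
    using \<open>a \<in> A\<close> subset Rclass_self[of a M] unfolding Rclasses_def by blast
  ultimately show "\<exists>X\<in>meeting_Rclasses. Y = X \<inter> A"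
    by blast
qed

lemma Rclass_le_restrict_iff:
  assumes "X \<in> meeting_Rclasses" "Y \<in> meeting_Rclasses"
  shows "Rclass_le A (X \<inter> A) (Y \<inter> A) \<longleftrightarrow> Rclass_le M X Y"
proof -
  obtain a b where ab: "a \<in> A" "b \<in> A" and XY: "X = Rclass M a" "Y = Rclass M b"
    using assms by (metis meeting_RclassE)
  have "Rclass_le A (X \<inter> A) (Y \<inter> A) \<longleftrightarrow> Rclass_le A (Rclass A a) (Rclass A b)"
    using ab by (simp add: XY Rclass_restrict)
  also have "\<dots> \<longleftrightarrow> leq_R A a b"
    using ab by (rule Rclass_le_Rclass_iff)
  also have "\<dots> \<longleftrightarrow> leq_R M a b"
    using ab by (rule leq_R_agree)
  also have "\<dots> \<longleftrightarrow> Rclass_le M X Y"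
    using ab subset Rclass_le_Rclass_iff[of a M b] by (auto simp: XY)
  finally show ?thesis .
qed

lemma Rchain_restrict_iff:
  assumes "C \<subseteq> meeting_Rclasses"
  shows "Rchain A ((\<lambda>X. X \<inter> A) ` C) \<longleftrightarrow> Rchain M C"
proof -
  have "(\<lambda>X. X \<inter> A) ` C \<subseteq> Rclasses A"
    using assms bij_betw_imp_surj_on[OF bij_betw_restrict_Rclasses] by blast
  then show ?thesis
    using assms unfolding Rchain_def by (auto simp: Rclass_le_restrict_iff subset_iff)
qed

lemma R_height_eq_meeting_chains:
  "R_height A =
    (SUP C\<in>{C. Rchain M C \<and> finite C \<and> (\<forall>X\<in>C. X \<inter> A \<noteq> {})}. enat (card C))"
  (is "_ = (SUP C\<in>?meeting. _)")
proof -
  let ?restrict = "(`) (\<lambda>X. X \<inter> A)"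
  have inj: "inj_on (\<lambda>X. X \<inter> A) C" if "C \<subseteq> meeting_Rclasses" for C
    using that inj_on_subset bij_betw_imp_inj_on[OF bij_betw_restrict_Rclasses] by blast
  have meeting_iff: "C \<in> ?meeting \<longleftrightarrow> Rchain M C \<and> finite C \<and> C \<subseteq> meeting_Rclasses" for C
    unfolding Rchain_def by blast
  have chains_eq: "{C. Rchain A C \<and> finite C} = ?restrict ` ?meeting"
  proof (intro equalityI subsetI)
    fix D assume "D \<in> {C. Rchain A C \<and> finite C}"
    then have "D \<subseteq> ?restrict meeting_Rclasses" "Rchain A D" "finite D"
      using bij_betw_imp_surj_on[OF bij_betw_restrict_Rclasses] unfolding Rchain_def by auto
    then obtain C where "C \<subseteq> meeting_Rclasses" "D = ?restrict C"
      by (auto simp: subset_image_iff)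
    then show "D \<in> ?restrict ` ?meeting"
      using \<open>Rchain A D\<close> \<open>finite D\<close> inj
      by (auto simp: meeting_iff Rchain_restrict_iff finite_image_iff)
  next
    fix D assume "D \<in> ?restrict ` ?meeting"
    then obtain C where "D = ?restrict C" "C \<subseteq> meeting_Rclasses" "Rchain M C" "finite C"
      using meeting_iff by blast
    then show "D \<in> {C. Rchain A C \<and> finite C}"
      by (simp add: Rchain_restrict_iff)
  qed
  have "R_height A = (SUP C\<in>?restrict ` ?meeting. enat (card C))"
    unfolding R_height_def chains_eq ..
  also have "\<dots> = (SUP C\<in>?meeting. enat (card (?restrict C)))"
    by (simp only: image_image)
  also have "\<dots> = (SUP C\<in>?meeting. enat (card C))"
  proof (rule SUP_cong)
    fix C assume "C \<in> ?meeting"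
    then have "C \<subseteq> meeting_Rclasses"
      using meeting_iff by blast
    then show "enat (card (?restrict C)) = enat (card C)"
      by (simp add: card_image inj)
  qed simp
  finally show ?thesis .
qed

end

lemma R_compatible_left_ideal:
  assumes "left_ideal A" "\<forall>a\<in>A. regular a"
  shows "R_compatible UNIV A"
  using left_ideal_leq_R_iff[OF assms] by unfold_locales auto

theorem proposition3p12:
  fixes A :: "'a::semigroup_mult set"
  assumes "R_height (UNIV :: 'a set) \<noteq> \<infinity>"
    and "left_ideal A"
    and "\<forall>a\<in>A. regular a"
  shows "R_height A =
    (SUP C\<in>{C. Rchain (UNIV :: 'a set) C \<and> finite C \<and> (\<forall>X\<in>C. X \<inter> A \<noteq> {})}. enat (card C))"
  using R_compatible.R_height_eq_meeting_chains[OF R_compatible_left_ideal[OF assms(2,3)]] .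

end
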